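(* Let $\mathcal{F}\subseteq[\omega]^{<\omega}$ be a compact hereditary family covering $\omega$ which is large. Then the unit vector sequence $(e_n)$ is weakly null in $X^{\mathcal{F}}$ (i.e. $f(e_n)\to0$ for every continuous linear functional $f$ on $X^\mathcal{F}$) but $\lVert e_n\rVert^{\mathcal{F}}=1$ for all $n$. Hence $X^{\mathcal{F}}$ does not have the Schur property. In particular $X^{\mathcal{S}}$ does not have the Schur property.
   Context: $\omega=\{1,2,3,\dots\}$; $[\omega]^{<\omega}$ and $[M]^n$ denote the finite subsets of $\omega$ and the $n$-element subsets of $M$. Subsets of $\omega$ are identified with elements of $2^\omega$; compact means compact in $2^\omega$; hereditary means closed under subsets. A family $\mathcal{F}$ is large if $\mathcal{F}\cap[M]^n\neq\emptyset$ for every infinite $M\subseteq\omega$ and every $n\in\omega$. A partition is a family $\mathcal{P}\subseteq\mathcal{P}(\omega)$ with $\emptyset\in\mathcal{P}$, $\bigcup\mathcal{P}=\omega$, elements pairwise disjoint; $\mathbb{P}_\mathcal{F}$ is the set of partitions contained in $\mathcal{F}$. $\lVert x\rVert^{\mathcal{F}}=\inf_{\mathcal{P}\in\mathbb{P}_\mathcal{F}}\sum_{F\in\mathcal{P}}\sup_{k\in F}|x(k)|$; $X^\mathcal{F}$ is the completion of $c_{00}$ under this quasi-norm. A (quasi-)Banach space has the Schur property if every weakly null sequence converges to $0$ in (quasi-)norm. $\mathcal{S}=\{A\subseteq\omega:|A|\le\min A\}$ is the Schreier family. *)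

theory Defs
  imports "HOL-Analysis.Analysis"
begin

definition omega :: "nat set" where "omega = {1..}"

text \<open>Subsets of omega identified with elements of 2^omega (characteristic functions,
  with product topology on nat => bool).\<close>
definition compact_family :: "nat set set \<Rightarrow> bool" where
  "compact_family F \<longleftrightarrow> compact ((\<lambda>A k. k \<in> A) ` F)"

definition hereditary :: "nat set set \<Rightarrow> bool" where
  "hereditary F \<longleftrightarrow> (\<forall>A\<in>F. \<forall>B. B \<subseteq> A \<longrightarrow> B \<in> F)"

definition large :: "nat set set \<Rightarrow> bool" where
  "large F \<longleftrightarrow> (\<forall>M. M \<subseteq> omega \<longrightarrow> infinite M \<longrightarrow>
      (\<forall>n\<in>omega. \<exists>A\<in>F. A \<subseteq> M \<and> card A = n))"

definition is_partition :: "nat set set \<Rightarrow> bool" where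
  "is_partition P \<longleftrightarrow> {} \<in> P \<and> \<Union>P = omega \<and>
     (\<forall>A\<in>P. \<forall>B\<in>P. A \<noteq> B \<longrightarrow> A \<inter> B = {})"

definition partitions_in :: "nat set set \<Rightarrow> nat set set set" where
  "partitions_in F = {P. is_partition P \<and> P \<subseteq> F}"

definition supabs :: "(nat \<Rightarrow> real) \<Rightarrow> nat set \<Rightarrow> real" where
  "supabs x A = (if A = {} then 0 else (SUP k\<in>A. \<bar>x k\<bar>))"

definition Fnorm :: "nat set set \<Rightarrow> (nat \<Rightarrow> real) \<Rightarrow> real" where
  "Fnorm F x = (INF P\<in>partitions_in F. (\<Sum>\<^sub>\<infinity>A\<in>P. supabs x A))"

text \<open>c_00: finitely supported real sequences indexed by omega.\<close>
definition c00 :: "(nat \<Rightarrow> real) set" where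
  "c00 = {x. finite {k. x k \<noteq> 0} \<and> x 0 = 0}"

definition unit_vec :: "nat \<Rightarrow> nat \<Rightarrow> real" where
  "unit_vec n = (\<lambda>k. if k = n then 1 else 0)"

text \<open>Continuous linear functionals on X^F, via their (injective) restriction to the
  dense subspace c_00: linear maps on c_00 bounded w.r.t. the quasi-norm.\<close>
definition cont_functional :: "nat set set \<Rightarrow> ((nat \<Rightarrow> real) \<Rightarrow> real) \<Rightarrow> bool" where
  "cont_functional F f \<longleftrightarrow>
     (\<forall>x\<in>c00. \<forall>y\<in>c00. \<forall>a b. f (\<lambda>k. a * x k + b * y k) = a * f x + b * f y) \<and>
     (\<exists>C. \<forall>x\<in>c00. \<bar>f x\<bar> \<le> C * Fnorm F x)"

definition weakly_null :: "nat set set \<Rightarrow> (nat \<Rightarrow> nat \<Rightarrow> real) \<Rightarrow> bool" where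
  "weakly_null F u \<longleftrightarrow> (\<forall>f. cont_functional F f \<longrightarrow> (\<lambda>n. f (u n)) \<longlonglongrightarrow> 0)"

definition schreier :: "nat set set" where
  "schreier = {A. A \<subseteq> omega \<and> finite A \<and> (A \<noteq> {} \<longrightarrow> card A \<le> Min A)}"

end

theory Submission
  imports Defs
begin

(* Any partition of omega has exactly one block containing n, so every e_n has norm 1.
   On the other hand, for A in F the partition of omega into A and singletons shows that
   the indicator 1_A has norm at most 1, so a bounded linear functional f is bounded on
   all such indicators. If f(e_n) >= r > 0 for infinitely many n, largeness provides
   sets A in F of any size among these n, and f(1_A) = sum of f(e_n) over A >= |A| r
   is unbounded. *)

lemma unit_vec_eq_indicator: "unit_vec n = indicator {n}"
  by (auto simp: unit_vec_def indicator_def)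

lemma supabs_indicator: "supabs (indicator A) B = (if A \<inter> B = {} then 0 else 1)"
proof (cases "A \<inter> B = {}")
  case disjoint: True
  show ?thesis
  proof (cases "B = {}")
    case False
    have "(SUP k\<in>B. \<bar>indicator A k\<bar>) = (SUP k\<in>B. 0 :: real)"
      using disjoint by (intro SUP_cong) (auto simp: indicator_def)
    with False disjoint show ?thesis by (simp add: supabs_def)
  qed (simp add: supabs_def)
next
  case False
  then obtain a where "a \<in> A" "a \<in> B" by blast
  then have "(SUP k\<in>B. \<bar>indicator A k\<bar>) = (1 :: real)"
    by (intro cSup_eq_maximum) (force simp: indicator_def)+
  with False show ?thesis by (auto simp: supabs_def)
qed

lemma infsum_eq_single:
  assumes "a \<in> P" and "\<And>B. B \<in> P \<Longrightarrow> B \<noteq> a \<Longrightarrow> g B = 0"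
  shows "infsum g P = g a"
proof -
  have "infsum g P = infsum g {a}"
    by (rule infsum_cong_neutral) (use assms in auto)
  then show ?thesis by simp
qed

lemma hereditary_cover_contains_singletons:
  assumes "hereditary F" and "\<Union>F = omega"
  shows "{} \<in> F" and "\<And>k. k \<in> omega \<Longrightarrow> {k} \<in> F"
proof -
  show "{k} \<in> F" if "k \<in> omega" for k
    using assms that unfolding hereditary_def by blast
  then show "{} \<in> F"
    using assms unfolding hereditary_def omega_def by blast
qed

definition block_partition :: "nat set \<Rightarrow> nat set set" where
  "block_partition A = insert {} (insert A ((\<lambda>k. {k}) ` (omega - A)))"

lemma block_partition_in_partitions:
  assumes "{} \<in> F" and "\<And>k. k \<in> omega \<Longrightarrow> {k} \<in> F" and "A \<in> F" and "A \<subseteq> omega"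
  shows "block_partition A \<in> partitions_in F"
  using assms unfolding partitions_in_def is_partition_def block_partition_def by blast

lemma Fnorm_indicator_bounds:
  assumes "{} \<in> F" and "\<And>k. k \<in> omega \<Longrightarrow> {k} \<in> F" and "A \<in> F" and "A \<subseteq> omega"
  shows "0 \<le> Fnorm F (indicator A)" and "Fnorm F (indicator A) \<le> 1"
proof -
  let ?norm = "\<lambda>P. \<Sum>\<^sub>\<infinity>B\<in>P. supabs (indicator A) B"
  have nonneg: "0 \<le> ?norm P" for P
    by (intro infsum_nonneg) (simp add: supabs_indicator)
  have partition: "block_partition A \<in> partitions_in F"
    using block_partition_in_partitions[OF assms] .
  have "?norm (block_partition A) = supabs (indicator A) A"
    by (rule infsum_eq_single) (auto simp: block_partition_def supabs_indicator)
  also have "\<dots> \<le> 1"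
    by (simp add: supabs_indicator)
  finally have "?norm (block_partition A) \<le> 1" .
  moreover have "bdd_below (?norm ` partitions_in F)"
    using nonneg by (intro bdd_belowI[where m = 0]) auto
  then have "Fnorm F (indicator A) \<le> ?norm (block_partition A)"
    unfolding Fnorm_def by (rule cINF_lower[OF _ partition])
  ultimately show "Fnorm F (indicator A) \<le> 1"
    by linarith
  show "0 \<le> Fnorm F (indicator A)"
    unfolding Fnorm_def using partition nonneg by (intro cINF_greatest) auto
qed

lemma Fnorm_unit_vec:
  assumes "{} \<in> F" and "\<And>k. k \<in> omega \<Longrightarrow> {k} \<in> F" and n: "n \<in> omega"
  shows "Fnorm F (unit_vec n) = 1"
proof -
  have "(\<Sum>\<^sub>\<infinity>B\<in>P. supabs (unit_vec n) B) = 1" if "P \<in> partitions_in F" for P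
  proof -
    have partition: "is_partition P"
      using that by (simp add: partitions_in_def)
    then obtain A where A: "A \<in> P" "n \<in> A"
      using n unfolding is_partition_def by blast
    have "(\<Sum>\<^sub>\<infinity>B\<in>P. supabs (unit_vec n) B) = supabs (unit_vec n) A"
    proof (rule infsum_eq_single)
      fix B assume "B \<in> P" "B \<noteq> A"
      then have "n \<notin> B"
        using partition A unfolding is_partition_def by blast
      then show "supabs (unit_vec n) B = 0"
        by (simp add: unit_vec_eq_indicator supabs_indicator)
    qed (fact A)
    also have "\<dots> = 1"
      using A by (simp add: unit_vec_eq_indicator supabs_indicator)
    finally show ?thesis .
  qed
  moreover have "partitions_in F \<noteq> {}"
    using block_partition_in_partitions[OF assms(1,2) assms(1)] by blast
  ultimately show ?thesis
    unfolding Fnorm_def by simp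
qed

lemma indicator_in_c00: "finite A \<Longrightarrow> A \<subseteq> omega \<Longrightarrow> indicator A \<in> c00"
  by (auto simp: c00_def indicator_def omega_def)

lemma cont_functional_uminus: "cont_functional F f \<Longrightarrow> cont_functional F (\<lambda>x. - f x)"
  unfolding cont_functional_def by (auto simp: algebra_simps)

lemma cont_functional_linear:
  assumes "cont_functional F f" and "x \<in> c00" and "y \<in> c00"
  shows "f (\<lambda>k. a * x k + b * y k) = a * f x + b * f y"
  using assms unfolding cont_functional_def by blast

lemma cont_functional_indicator_eq_sum:
  assumes "cont_functional F f" and "finite A" and "A \<subseteq> omega"
  shows "f (indicator A) = (\<Sum>k\<in>A. f (unit_vec k))"
  using assms(2,3)
proof (induction A rule: finite_induct)
  case empty
  have zero: "(\<lambda>k. 0 :: real) \<in> c00"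
    by (simp add: c00_def)
  show ?case
    using cont_functional_linear[OF assms(1) zero zero, of 0 0] by simp
next
  case (insert a A)
  have "indicator (insert a A) = (\<lambda>k. 1 * indicator A k + 1 * unit_vec a k)"
    using insert.hyps by (auto simp: indicator_def unit_vec_def)
  moreover have "unit_vec a \<in> c00" "indicator A \<in> c00"
    using insert.prems insert.hyps
    by (auto simp: unit_vec_eq_indicator intro!: indicator_in_c00)
  ultimately have "f (indicator (insert a A)) = f (indicator A) + f (unit_vec a)"
    using cont_functional_linear[OF assms(1), of "indicator A" "unit_vec a" 1 1] by simp
  with insert show ?case by simp
qed

lemma cont_functional_bounded_on_indicators:
  assumes f: "cont_functional F f" and "{} \<in> F" and "\<And>k. k \<in> omega \<Longrightarrow> {k} \<in> F"
  obtains C where "\<And>A. A \<in> F \<Longrightarrow> finite A \<Longrightarrow> A \<subseteq> omega \<Longrightarrow> f (indicator A) \<le> C"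
proof -
  obtain C where C: "\<And>x. x \<in> c00 \<Longrightarrow> \<bar>f x\<bar> \<le> C * Fnorm F x"
    using f unfolding cont_functional_def by blast
  have "f (indicator A) \<le> \<bar>C\<bar>" if "A \<in> F" "finite A" "A \<subseteq> omega" for A
  proof -
    have bounds: "0 \<le> Fnorm F (indicator A)" "Fnorm F (indicator A) \<le> 1"
      using Fnorm_indicator_bounds assms(2,3) that by blast+
    have "f (indicator A) \<le> C * Fnorm F (indicator A)"
      using C indicator_in_c00 that by fastforce
    also have "\<dots> \<le> \<bar>C\<bar> * Fnorm F (indicator A)"
      using bounds by (intro mult_right_mono) auto
    also have "\<dots> \<le> \<bar>C\<bar>"
      using bounds by (intro mult_left_le) auto
    finally show ?thesis .
  qed
  then show ?thesis using that by blast
qed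

lemma finite_unit_vec_ge:
  assumes f: "cont_functional F f" and "{} \<in> F" and "\<And>k. k \<in> omega \<Longrightarrow> {k} \<in> F"
    and "large F" and "r > 0"
  shows "finite {k \<in> omega. r \<le> f (unit_vec k)}" (is "finite ?M")
proof (rule ccontr)
  assume "infinite ?M"
  obtain C where C: "\<And>A. A \<in> F \<Longrightarrow> finite A \<Longrightarrow> A \<subseteq> omega \<Longrightarrow> f (indicator A) \<le> C"
    using cont_functional_bounded_on_indicators[OF assms(1-3)] by blast
  obtain n where "C < real n * r"
    using ex_less_of_nat_mult[OF \<open>r > 0\<close>] by blast
  then have C_less: "C < real (Suc n) * r"
    using \<open>r > 0\<close> by (simp add: distrib_right)
  obtain A where A: "A \<in> F" "A \<subseteq> ?M" "card A = Suc n"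
  proof -
    have "?M \<subseteq> omega" "Suc n \<in> omega"
      by (auto simp: omega_def)
    then show ?thesis
      using that \<open>large F\<close> \<open>infinite ?M\<close> unfolding large_def by blast
  qed
  then have "finite A" "A \<subseteq> omega"
    using card_ge_0_finite[of A] by auto
  have "real (Suc n) * r \<le> (\<Sum>k\<in>A. f (unit_vec k))"
    using sum_bounded_below[of A r "\<lambda>k. f (unit_vec k)"] A by auto
  also have "\<dots> = f (indicator A)"
    using cont_functional_indicator_eq_sum[OF f \<open>finite A\<close> \<open>A \<subseteq> omega\<close>] by simp
  also have "\<dots> \<le> C"
    using A(1) \<open>finite A\<close> \<open>A \<subseteq> omega\<close> by (rule C)
  finally show False
    using C_less by linarith
qed

lemma large_weakly_null_unit_vec:
  assumes "{} \<in> F" and "\<And>k. k \<in> omega \<Longrightarrow> {k} \<in> F" and "large F"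
  shows "weakly_null F (\<lambda>n. unit_vec (Suc n))"
  unfolding weakly_null_def
proof (intro allI impI)
  fix f assume f: "cont_functional F f"
  show "(\<lambda>n. f (unit_vec (Suc n))) \<longlonglongrightarrow> 0"
  proof (rule tendstoI)
    fix r :: real assume "r > 0"
    let ?M = "\<lambda>g. {k \<in> omega. r \<le> g (unit_vec k)}"
    have "finite (?M f \<union> ?M (\<lambda>x. - f x))"
      using finite_unit_vec_ge[OF _ assms] f cont_functional_uminus \<open>r > 0\<close> by blast
    then have "finite (Suc -` (?M f \<union> ?M (\<lambda>x. - f x)))"
      by (rule finite_vimageI) simp
    moreover have "{n. \<not> dist (f (unit_vec (Suc n))) 0 < r} \<subseteq> Suc -` (?M f \<union> ?M (\<lambda>x. - f x))"
      by (auto simp: omega_def)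
    ultimately show "\<forall>\<^sub>F n in sequentially. dist (f (unit_vec (Suc n))) 0 < r"
      unfolding cofinite_eq_sequentially[symmetric] eventually_cofinite by (rule finite_subset[rotated])
  qed
qed

lemma large_schreier: "large schreier"
  unfolding large_def
proof (intro allI impI ballI)
  fix M :: "nat set" and n assume M: "M \<subseteq> omega" "infinite M" and n: "n \<in> omega"
  have "M \<subseteq> (M \<inter> {n..}) \<union> {..<n}"
    by auto
  then have "infinite (M \<inter> {n..})"
    using M(2) finite_subset by blast
  then obtain A where A: "A \<subseteq> M \<inter> {n..}" "finite A" "card A = n"
    using infinite_arbitrarily_large by blast
  then have "A \<noteq> {}"
    using n by (auto simp: omega_def)
  then have "A \<in> schreier"
    using A M(1) by (auto simp: schreier_def)
  then show "\<exists>A\<in>schreier. A \<subseteq> M \<and> card A = n"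
    using A by blast
qed

theorem mainTheorem14:
  shows "(\<forall>F. F \<subseteq> {A. A \<subseteq> omega \<and> finite A} \<longrightarrow> compact_family F \<longrightarrow> hereditary F
            \<longrightarrow> \<Union>F = omega \<longrightarrow> large F \<longrightarrow>
            weakly_null F (\<lambda>n. unit_vec (Suc n)) \<and> (\<forall>n\<in>omega. Fnorm F (unit_vec n) = 1))
       \<and> (weakly_null schreier (\<lambda>n. unit_vec (Suc n)) \<and> (\<forall>n\<in>omega. Fnorm schreier (unit_vec n) = 1))"
proof (intro conjI allI impI ballI)
  fix F :: "nat set set"
  assume "hereditary F" and "\<Union>F = omega" and "large F"
  note singletons = hereditary_cover_contains_singletons[OF \<open>hereditary F\<close> \<open>\<Union>F = omega\<close>]
  show "weakly_null F (\<lambda>n. unit_vec (Suc n))"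
    using large_weakly_null_unit_vec[OF singletons \<open>large F\<close>] .
  show "Fnorm F (unit_vec n) = 1" if "n \<in> omega" for n
    using Fnorm_unit_vec[OF singletons that] .
next
  have "{} \<in> schreier" and singletons: "\<And>k. k \<in> omega \<Longrightarrow> {k} \<in> schreier"
    by (auto simp: schreier_def omega_def)
  then show "weakly_null schreier (\<lambda>n. unit_vec (Suc n))"
    using large_weakly_null_unit_vec large_schreier by blast
  show "Fnorm schreier (unit_vec n) = 1" if "n \<in> omega" for n
    using Fnorm_unit_vec \<open>{} \<in> schreier\<close> singletons that by blast
qed

end
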